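(* Let $n\in\mathbb{N}$ and let $f$ be a complex function. If $f$ is entire (respectively meromorphic) on $\mathbb{C}$, then $\mathcal{D}_q^n f$, $\mathcal{A}_{q^n}f$ and the product $(\eta_{q^n}f)(\eta_{q^{-n}}f)$ are all entire (respectively meromorphic) on $\mathbb{C}$.
   Context: Fix $q\in\mathbb{C}$ with $0<|q|<1$. Every $x\in\mathbb{C}$ is written uniquely as $x=\frac{z+z^{-1}}{2}$ with $|z|\ge 1$, where, when $|z|=1$, one takes $z=x+i\sqrt{1-x^2}$ (so that $x\in[-1,1]$); thus $|z|\to\infty$ iff $|x|\to\infty$. For a complex function $f$ define $(\eta_q f)(x)=f\big(\tfrac{q^{1/2}z+q^{-1/2}z^{-1}}{2}\big)$, $(\eta_q^{-1}f)(x)=f\big(\tfrac{q^{-1/2}z+q^{1/2}z^{-1}}{2}\big)$, $\eta_q^0f=f$, $\eta_q^{n}f=\eta_q(\eta_q^{n-1}f)$, $\eta_q^{-n}f=\eta_q^{-1}(\eta_q^{-(n-1)}f)$ for $n\in\mathbb{N}$, and $(\eta_{q^{n}}f)(x)=f\big(\tfrac{q^{n/2}z+q^{-n/2}z^{-1}}{2}\big)$, $(\eta_{q^{-n}}f)(x)=f\big(\tfrac{q^{-n/2}z+q^{n/2}z^{-1}}{2}\big)$. Write $\eta_q^{k}x$ for $\eta_q^k$ applied to the identity map. The Askey-Wilson operator is $(\mathcal{D}_qf)(x)=\frac{(\eta_qf)(x)-(\eta_q^{-1}f)(x)}{\eta_qx-\eta_q^{-1}x}$ for $x\neq\pm1$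 and $(\mathcal{D}_qf)(\pm1)=\lim_{x\to\pm1}(\mathcal{D}_qf)(x)$; $\mathcal{D}_q^0f=f$, $\mathcal{D}_q^nf=\mathcal{D}_q(\mathcal{D}_q^{n-1}f)$. The averaging operator is $(\mathcal{A}_{q^n}f)(x)=\frac{(\eta_{q^n}f)(x)+(\eta_{q^{-n}}f)(x)}{2}$ for $n\in\mathbb{N}$, and $\mathcal{A}_{q^0}f=f$. *)

theory Defs
  imports "HOL-Complex_Analysis.Complex_Analysis"
begin

text \<open>The parametrisation x = (z + 1/z)/2 with |z| >= 1; on [-1,1] one takes
  z = x + i sqrt(1 - x^2) (so |z| = 1); otherwise z is the unique root with |z| > 1.\<close>
definition zpar :: "complex \<Rightarrow> complex" where
  "zpar x = (if Im x = 0 \<and> \<bar>Re x\<bar> \<le> 1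
             then Complex (Re x) (sqrt (1 - (Re x)\<^sup>2))
             else (THE z. cmod z > 1 \<and> (z + inverse z) / 2 = x))"

text \<open>With s = q^{1/2} (principal
  square root csqrt q) this is eta_q; with s = q^{-1/2} it is eta_q^{-1};
  s = q^{n/2} gives eta_{q^n}, s = q^{-n/2} gives eta_{q^{-n}}.\<close>
definition eta_s :: "complex \<Rightarrow> (complex \<Rightarrow> complex) \<Rightarrow> complex \<Rightarrow> complex" where
  "eta_s s f x = f ((s * zpar x + inverse s * inverse (zpar x)) / 2)"

definition eta_q :: "complex \<Rightarrow> (complex \<Rightarrow> complex) \<Rightarrow> complex \<Rightarrow> complex" where
  "eta_q q f = eta_s (csqrt q) f"

definition eta_q_inv :: "complex \<Rightarrow> (complex \<Rightarrow> complex) \<Rightarrow> complex \<Rightarrow> complex" where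
  "eta_q_inv q f = eta_s (inverse (csqrt q)) f"

definition eta_qpow :: "complex \<Rightarrow> nat \<Rightarrow> (complex \<Rightarrow> complex) \<Rightarrow> complex \<Rightarrow> complex" where
  "eta_qpow q n f = eta_s (csqrt q ^ n) f"

definition eta_qpow_neg :: "complex \<Rightarrow> nat \<Rightarrow> (complex \<Rightarrow> complex) \<Rightarrow> complex \<Rightarrow> complex" where
  "eta_qpow_neg q n f = eta_s (inverse (csqrt q) ^ n) f"

definition AW_quot :: "complex \<Rightarrow> (complex \<Rightarrow> complex) \<Rightarrow> complex \<Rightarrow> complex" where
  "AW_quot q f x = (eta_q q f x - eta_q_inv q f x) / (eta_q q id x - eta_q_inv q id x)"

definition AW :: "complex \<Rightarrow> (complex \<Rightarrow> complex) \<Rightarrow> complex \<Rightarrow> complex" where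
  "AW q f x = (if x = 1 \<or> x = -1 then Lim (at x) (AW_quot q f) else AW_quot q f x)"

definition AW_pow :: "complex \<Rightarrow> nat \<Rightarrow> (complex \<Rightarrow> complex) \<Rightarrow> complex \<Rightarrow> complex" where
  "AW_pow q n f = (AW q ^^ n) f"

definition Avg :: "complex \<Rightarrow> nat \<Rightarrow> (complex \<Rightarrow> complex) \<Rightarrow> complex \<Rightarrow> complex" where
  "Avg q n f = (if n = 0 then f else (\<lambda>x. (eta_qpow q n f x + eta_qpow_neg q n f x) / 2))"

end

theory Submission
  imports Defs
begin

text \<open>Each operator in the statement has the form \<open>x \<mapsto> G (zpar x)\<close> with \<open>G\<close> holomorphic
  (meromorphic) on \<open>\<complex> - {0}\<close> and invariant under \<open>z \<mapsto> 1/z\<close>: writing \<open>J w = (w + 1/w)/2\<close>,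
  one has \<open>eta_s s f x = f (J (s * zpar x))\<close> and \<open>J (s/z) = J (z/s)\<close>. Since \<open>zpar\<close> is a right
  inverse of \<open>J\<close> which away from \<open>\<pm>1\<close> agrees, up to inversion, with an analytic local inverse
  of \<open>J\<close>, such a \<open>G\<close> descends to a holomorphic (meromorphic) function off \<open>\<pm>1\<close>; at the
  branch points \<open>zpar\<close> is continuous, so the singularities there are removable (not
  essential). For the Askey-Wilson quotient the numerator is odd under inversion, hence
  vanishes at \<open>\<pm>1\<close> together with the denominator \<open>(s - 1/s)(z - 1/z)/2\<close>.\<close>

definition joukowski :: "complex \<Rightarrow> complex" where
  "joukowski w = (w + inverse w) / 2"

lemma joukowski_inverse [simp]: "joukowski (inverse w) = joukowski w"
  by (simp add: joukowski_def add.commute)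

lemma joukowski_mult_inverse: "joukowski (t * inverse z) = joukowski (inverse t * z)"
  by (metis inverse_inverse_eq inverse_mult_distrib joukowski_inverse)

lemma joukowski_eq_imp_eq_or_inverse:
  assumes "z \<noteq> 0" "w \<noteq> 0" "joukowski z = joukowski w"
  shows "z = w \<or> z = inverse w"
proof -
  have "(z - w) * (z * w - 1) = z * w * (2 * joukowski z - 2 * joukowski w)"
    using assms(1,2) by (simp add: joukowski_def field_simps)
  then have "(z - w) * (z * w - 1) = 0"
    using assms(3) by simp
  then have "z = w \<or> z * w = 1"
    by simp
  then show ?thesis
    using inverse_unique[of z w] by (auto simp: mult.commute)
qed

lemma joukowski_add_sqrt:
  assumes "r * r = x * x - 1"
  shows "x + r \<noteq> 0" "joukowski (x + r) = x"
proof -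
  have prod: "(x + r) * (x - r) = 1"
    using assms by (simp add: algebra_simps)
  then show "x + r \<noteq> 0" by auto
  have "inverse (x + r) = x - r"
    using prod by (rule inverse_unique)
  then show "joukowski (x + r) = x"
    by (simp add: joukowski_def)
qed

lemma ex1_joukowski_preimage_outside_disc:
  assumes "\<not> (Im x = 0 \<and> \<bar>Re x\<bar> \<le> 1)"
  shows "\<exists>!z. 1 < cmod z \<and> joukowski z = x"
proof (rule ex_ex1I)
  define w where "w = x + csqrt (x * x - 1)"
  have sq: "csqrt (x * x - 1) * csqrt (x * x - 1) = x * x - 1"
    using power2_csqrt[of "x * x - 1"] by (simp add: power2_eq_square)
  have w0: "w \<noteq> 0" and jw: "joukowski w = x"
    unfolding w_def using joukowski_add_sqrt[OF sq] by auto
  have "cmod w \<noteq> 1"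
  proof
    assume "cmod w = 1"
    then have "inverse w = cnj w"
      using complex_norm_square[of w] by (intro inverse_unique) simp
    then have "x = of_real (Re w)"
      using jw by (simp add: joukowski_def complex_add_cnj)
    moreover have "\<bar>Re w\<bar> \<le> 1"
      using \<open>cmod w = 1\<close> abs_Re_le_cmod[of w] by simp
    ultimately show False
      using assms by simp
  qed
  then consider "1 < cmod w" | "1 < cmod (inverse w)"
    using w0 by (fastforce simp: norm_inverse one_less_inverse)
  then show "\<exists>z. 1 < cmod z \<and> joukowski z = x"
    using jw joukowski_inverse[of w] by cases blast+
next
  fix z1 z2
  assume z1: "1 < cmod z1 \<and> joukowski z1 = x" and z2: "1 < cmod z2 \<and> joukowski z2 = x"
  then have "z1 = z2 \<or> z1 = inverse z2"
    by (intro joukowski_eq_imp_eq_or_inverse) auto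
  moreover have "cmod (inverse z2) < 1"
    using z2 by (simp add: norm_inverse inverse_less_1_iff)
  ultimately show "z1 = z2"
    using z1 by auto
qed

lemma zpar_nonzero_joukowski: "zpar x \<noteq> 0 \<and> joukowski (zpar x) = x"
proof (cases "Im x = 0 \<and> \<bar>Re x\<bar> \<le> 1")
  case True
  define r where "r = \<i> * complex_of_real (sqrt (1 - (Re x)\<^sup>2))"
  have "r * r = x * x - 1"
    using True abs_square_le_1[of "Re x"]
    by (simp add: r_def complex_eq_iff power2_eq_square)
  moreover have "zpar x = x + r"
    using True by (simp add: zpar_def r_def complex_eq_iff)
  ultimately show ?thesis
    using joukowski_add_sqrt by simp
next
  case False
  have "zpar x = (THE z. 1 < cmod z \<and> joukowski z = x)"
    unfolding zpar_def joukowski_def by (rule if_not_P[OF False])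
  then have "1 < cmod (zpar x) \<and> joukowski (zpar x) = x"
    using theI'[OF ex1_joukowski_preimage_outside_disc[OF False]] by simp
  then show ?thesis by auto
qed

lemma zpar_nonzero: "zpar x \<noteq> 0"
  using zpar_nonzero_joukowski by blast

lemma joukowski_zpar [simp]: "joukowski (zpar x) = x"
  using zpar_nonzero_joukowski by blast

lemma zpar_pm1: "zpar 1 = 1" "zpar (-1) = -1"
  by (simp_all add: zpar_def complex_eq_iff)

lemma zpar_eq_pm1_iff: "c \<in> {1, -1} \<Longrightarrow> zpar x = c \<longleftrightarrow> x = c"
  by (metis joukowski_zpar zpar_pm1 insert_iff singletonD)

lemma zpar_minus_square: "(zpar x - x) * (zpar x - x) = x * x - 1"
proof -
  have "zpar x * (zpar x + inverse (zpar x) - 2 * x) = 0"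
    using joukowski_zpar[of x] by (simp add: joukowski_def)
  then show ?thesis
    using zpar_nonzero[of x] by (simp add: algebra_simps)
qed

lemma zpar_tendsto_pm1:
  assumes c: "c \<in> {1, -1}"
  shows "(zpar \<longlongrightarrow> c) (at c)"
proof -
  have bound: "cmod (zpar x - c) \<le> cmod (x - c) + sqrt (cmod (x * x - 1))" for x
  proof -
    have "cmod (zpar x - x) = sqrt (cmod (x * x - 1))"
      by (metis norm_ge_zero norm_mult power2_eq_square real_sqrt_unique zpar_minus_square)
    then show ?thesis
      using norm_triangle_ineq[of "x - c" "zpar x - x"] by simp
  qed
  have "((\<lambda>x. cmod (x - c) + sqrt (cmod (x * x - 1))) \<longlongrightarrow>
          cmod (c - c) + sqrt (cmod (c * c - 1))) (at c)"
    by (intro tendsto_intros)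
  then have "((\<lambda>x. cmod (x - c) + sqrt (cmod (x * x - 1))) \<longlongrightarrow> 0) (at c)"
    using c by auto
  then have "((\<lambda>x. zpar x - c) \<longlongrightarrow> 0) (at c)"
    by (rule Lim_null_comparison[rotated]) (use bound in auto)
  then show ?thesis
    by (simp add: LIM_zero_iff)
qed

lemma filterlim_zpar_at_pm1:
  assumes c: "c \<in> {1, -1}"
  shows "filterlim zpar (at c) (at c)"
proof (rule filterlim_atI)
  show "(zpar \<longlongrightarrow> c) (at c)"
    using c by (rule zpar_tendsto_pm1)
  show "\<forall>\<^sub>F x in at c. zpar x \<noteq> c"
    using eventually_neq_at_within[of c c UNIV] by eventually_elim (use zpar_eq_pm1_iff[OF c] in auto)
qed

lemma zpar_local_branch:
  assumes "x0 \<notin> {1, -1}"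
  obtains \<psi> where "\<psi> analytic_on {x0}" "\<psi> x0 = zpar x0"
    "\<And>x. zpar x = \<psi> x \<or> zpar x = inverse (\<psi> x)"
proof -
  define y0 where "y0 = zpar x0 - x0"
  have d0: "x0 * x0 - 1 \<noteq> 0"
    using assms by (auto simp: algebra_simps square_eq_1_iff)
  \<comment> \<open>The radicand is \<open>1\<close> at \<open>x0\<close>, off the branch cut of \<open>csqrt\<close>; the factor \<open>y0\<close>
    selects the square root of \<open>x0\<^sup>2 - 1\<close> that \<open>zpar\<close> uses at \<open>x0\<close>.\<close>
  define r where "r x = y0 * csqrt ((x * x - 1) / (x0 * x0 - 1))" for x
  have r_sq: "r x * r x = x * x - 1" for x
  proof -
    have "r x * r x = (y0 * y0) * (csqrt ((x * x - 1) / (x0 * x0 - 1)))\<^sup>2"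
      by (simp add: r_def power2_eq_square algebra_simps)
    then show ?thesis
      using d0 by (simp add: y0_def zpar_minus_square)
  qed
  show ?thesis
  proof
    show "(\<lambda>x. x + r x) analytic_on {x0}"
      unfolding r_def using d0 by (intro analytic_intros) (auto simp: complex_nonpos_Reals_iff)
    show "x0 + r x0 = zpar x0"
      using d0 by (simp add: r_def y0_def)
    show "zpar x = x + r x \<or> zpar x = inverse (x + r x)" for x
      using joukowski_add_sqrt[OF r_sq] zpar_nonzero
      by (intro joukowski_eq_imp_eq_or_inverse) auto
  qed
qed

lemma zpar_local_branch_invariant:
  assumes "x0 \<notin> {1, -1}" and inv: "\<And>z. z \<noteq> 0 \<Longrightarrow> G (inverse z) = G z"
  obtains \<psi> where "\<psi> analytic_on {x0}" "\<psi> x0 = zpar x0" "\<And>x. G (zpar x) = G (\<psi> x)"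
proof -
  obtain \<psi> where \<psi>: "\<psi> analytic_on {x0}" "\<psi> x0 = zpar x0"
    "\<And>x. zpar x = \<psi> x \<or> zpar x = inverse (\<psi> x)"
    using zpar_local_branch[OF assms(1)] by blast
  have "G (zpar x) = G (\<psi> x)" for x
    using \<psi>(3)[of x] inv[of "\<psi> x"] zpar_nonzero[of x] by auto
  with \<psi>(1,2) show ?thesis
    using that by blast
qed

lemma analytic_on_compose_zpar:
  assumes G: "G analytic_on zpar ` A" and A: "A \<inter> {1, -1} = {}"
    and inv: "\<And>z. z \<noteq> 0 \<Longrightarrow> G (inverse z) = G z"
  shows "(\<lambda>x. G (zpar x)) analytic_on A"
proof (subst analytic_on_analytic_at, intro ballI)
  fix x0 assume "x0 \<in> A"
  then obtain \<psi> where \<psi>: "\<psi> analytic_on {x0}" "\<psi> x0 = zpar x0" "\<And>x. G (zpar x) = G (\<psi> x)"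
    using zpar_local_branch_invariant[of x0 G] A inv by blast
  have "G analytic_on {\<psi> x0}"
    using G \<open>x0 \<in> A\<close> \<psi>(2) by (auto intro: analytic_on_subset)
  then have "(G \<circ> \<psi>) analytic_on {x0}"
    by (intro analytic_on_compose_gen[OF \<psi>(1)]) auto
  then show "(\<lambda>x. G (zpar x)) analytic_on {x0}"
    by (simp add: \<psi>(3) o_def)
qed

lemma holomorphic_on_compose_zpar:
  assumes G: "G holomorphic_on -{0}" and inv: "\<And>z. z \<noteq> 0 \<Longrightarrow> G (inverse z) = G z"
  shows "(\<lambda>x. G (zpar x)) holomorphic_on UNIV"
proof (rule no_isolated_singularity')
  have "G analytic_on -{0}"
    using G by (simp add: analytic_on_open open_Compl)
  then have "G analytic_on zpar ` (UNIV - {1, -1})"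
    by (rule analytic_on_subset) (use zpar_nonzero in auto)
  then show "(\<lambda>x. G (zpar x)) holomorphic_on UNIV - {1, -1}"
    by (intro analytic_imp_holomorphic analytic_on_compose_zpar inv) auto
  fix c :: complex assume c: "c \<in> {1, -1}"
  have "isCont G c"
    using c G holomorphic_on_imp_continuous_on continuous_on_eq_continuous_at[of "-{0}" G]
    by (auto simp: open_Compl)
  then show "((\<lambda>x. G (zpar x)) \<longlongrightarrow> G (zpar c)) (at c within UNIV)"
    using isCont_tendsto_compose[OF _ zpar_tendsto_pm1[OF c]] c zpar_pm1 by auto
qed auto

lemma isolated_singularity_at_compose_zpar:
  assumes c: "c \<in> {1, -1}" and G: "isolated_singularity_at G c"
    and inv: "\<And>z. z \<noteq> 0 \<Longrightarrow> G (inverse z) = G z"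
  shows "isolated_singularity_at (\<lambda>x. G (zpar x)) c"
proof -
  obtain \<rho> where \<rho>: "\<rho> > 0" "G analytic_on ball c \<rho> - {c}"
    using G unfolding isolated_singularity_at_def by blast
  have "\<forall>\<^sub>F x in at c. zpar x \<in> ball c \<rho> - {c} \<and> x \<notin> {1, -1}"
    using tendstoD[OF zpar_tendsto_pm1[OF c] \<rho>(1)]
      eventually_neq_at_within[of 1 c UNIV] eventually_neq_at_within[of "-1" c UNIV]
    by eventually_elim (use c zpar_eq_pm1_iff[OF c] in \<open>auto simp: dist_commute\<close>)
  then obtain d where d: "d > 0"
    "\<And>x. x \<noteq> c \<Longrightarrow> dist x c < d \<Longrightarrow> zpar x \<in> ball c \<rho> - {c} \<and> x \<notin> {1, -1}"
    unfolding eventually_at by auto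
  have "zpar ` (ball c d - {c}) \<subseteq> ball c \<rho> - {c}" "(ball c d - {c}) \<inter> {1, -1} = {}"
    using d(2) by (force simp: dist_commute)+
  then have "(\<lambda>x. G (zpar x)) analytic_on ball c d - {c}"
    by (intro analytic_on_compose_zpar inv analytic_on_subset[OF \<rho>(2)])
  with d(1) show ?thesis
    unfolding isolated_singularity_at_def by blast
qed

lemma not_essential_compose_zpar:
  assumes c: "c \<in> {1, -1}" and G: "not_essential G c"
  shows "not_essential (\<lambda>x. G (zpar x)) c"
  using G filterlim_compose[OF _ filterlim_zpar_at_pm1[OF c]]
  unfolding not_essential_def is_pole_def by blast

lemma meromorphic_on_compose_zpar:
  assumes G: "G meromorphic_on -{0}" and inv: "\<And>z. z \<noteq> 0 \<Longrightarrow> G (inverse z) = G z"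
  shows "(\<lambda>x. G (zpar x)) meromorphic_on UNIV"
proof (subst meromorphic_on_meromorphic_at, intro ballI)
  fix x0 :: complex
  show "(\<lambda>x. G (zpar x)) meromorphic_on {x0}"
  proof (cases "x0 \<in> {1, -1}")
    case True
    then have "G meromorphic_on {x0}"
      by (auto intro: meromorphic_on_subset[OF G])
    then show ?thesis
      using True inv isolated_singularity_at_compose_zpar not_essential_compose_zpar
      by (simp add: meromorphic_at_iff)
  next
    case False
    then obtain \<psi> where \<psi>: "\<psi> analytic_on {x0}" "\<psi> x0 = zpar x0" "\<And>x. G (zpar x) = G (\<psi> x)"
      using zpar_local_branch_invariant[of x0 G] inv by blast
    have "(\<lambda>x. G (\<psi> x)) meromorphic_on {x0}"
      using \<psi>(2) zpar_nonzero by (intro meromorphic_on_compose[OF G \<psi>(1)]) auto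
    then show ?thesis
      by (simp add: \<psi>(3))
  qed
qed

lemma eta_s_eq_joukowski: "eta_s t f x = f (joukowski (t * zpar x))"
  by (simp add: eta_s_def joukowski_def inverse_mult_distrib)

lemma eta_qpow_eq_joukowski:
  "eta_qpow q n f x = f (joukowski (csqrt q ^ n * zpar x))"
  "eta_qpow_neg q n f x = f (joukowski (inverse (csqrt q ^ n) * zpar x))"
  by (simp_all add: eta_qpow_def eta_qpow_neg_def eta_s_eq_joukowski power_inverse)

lemma AW_quot_eq_joukowski:
  "AW_quot q f x =
     (f (joukowski (csqrt q * zpar x)) - f (joukowski (inverse (csqrt q) * zpar x))) /
     (joukowski (csqrt q * zpar x) - joukowski (inverse (csqrt q) * zpar x))"
  by (simp add: AW_quot_def eta_q_def eta_q_inv_def eta_s_eq_joukowski)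

lemma analytic_on_joukowski_scaled: "(\<lambda>z. joukowski (t * z)) analytic_on -{0}"
proof (cases "t = 0")
  case True
  then show ?thesis by (simp add: joukowski_def)
next
  case False
  then show ?thesis unfolding joukowski_def by (intro analytic_intros) auto
qed

lemma holomorphic_on_compose_joukowski_scaled:
  "f holomorphic_on UNIV \<Longrightarrow> (\<lambda>z. f (joukowski (t * z))) holomorphic_on -{0}"
  using holomorphic_on_compose_gen[OF analytic_imp_holomorphic[OF analytic_on_joukowski_scaled]]
  by (simp add: o_def)

lemma meromorphic_on_compose_joukowski_scaled:
  "f meromorphic_on UNIV \<Longrightarrow> (\<lambda>z. f (joukowski (t * z))) meromorphic_on -{0}"
  by (rule meromorphic_on_compose[OF _ analytic_on_joukowski_scaled]) auto

lemma Avg_holomorphic: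
  assumes f: "f holomorphic_on UNIV"
  shows "Avg q n f holomorphic_on UNIV"
proof (cases "n = 0")
  case False
  define t where "t = csqrt q ^ n"
  have "(\<lambda>x. (f (joukowski (t * zpar x)) + f (joukowski (inverse t * zpar x))) / 2) holomorphic_on UNIV"
  proof (rule holomorphic_on_compose_zpar)
    show "(\<lambda>z. (f (joukowski (t * z)) + f (joukowski (inverse t * z))) / 2) holomorphic_on -{0}"
      by (intro holomorphic_intros holomorphic_on_compose_joukowski_scaled[OF f]) simp
  qed (simp only: joukowski_mult_inverse inverse_inverse_eq add.commute)
  then show ?thesis
    using False by (simp add: Avg_def eta_qpow_eq_joukowski t_def)
qed (simp add: Avg_def f)

lemma Avg_meromorphic:
  assumes f: "f meromorphic_on UNIV"
  shows "Avg q n f meromorphic_on UNIV"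
proof (cases "n = 0")
  case False
  define t where "t = csqrt q ^ n"
  have "(\<lambda>x. (f (joukowski (t * zpar x)) + f (joukowski (inverse t * zpar x))) / 2) meromorphic_on UNIV"
  proof (rule meromorphic_on_compose_zpar)
    show "(\<lambda>z. (f (joukowski (t * z)) + f (joukowski (inverse t * z))) / 2) meromorphic_on -{0}"
      by (intro meromorphic_intros meromorphic_on_compose_joukowski_scaled[OF f])
  qed (simp only: joukowski_mult_inverse inverse_inverse_eq add.commute)
  then show ?thesis
    using False by (simp add: Avg_def eta_qpow_eq_joukowski t_def)
qed (simp add: Avg_def f)

lemma eta_qpow_product_holomorphic:
  assumes f: "f holomorphic_on UNIV"
  shows "(\<lambda>x. eta_qpow q n f x * eta_qpow_neg q n f x) holomorphic_on UNIV"
proof -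
  define t where "t = csqrt q ^ n"
  have "(\<lambda>x. f (joukowski (t * zpar x)) * f (joukowski (inverse t * zpar x))) holomorphic_on UNIV"
  proof (rule holomorphic_on_compose_zpar)
    show "(\<lambda>z. f (joukowski (t * z)) * f (joukowski (inverse t * z))) holomorphic_on -{0}"
      by (intro holomorphic_on_mult holomorphic_on_compose_joukowski_scaled[OF f])
  qed (simp only: joukowski_mult_inverse inverse_inverse_eq, rule mult.commute)
  then show ?thesis
    by (simp add: eta_qpow_eq_joukowski t_def)
qed

lemma eta_qpow_product_meromorphic:
  assumes f: "f meromorphic_on UNIV"
  shows "(\<lambda>x. eta_qpow q n f x * eta_qpow_neg q n f x) meromorphic_on UNIV"
proof -
  define t where "t = csqrt q ^ n"
  have "(\<lambda>x. f (joukowski (t * zpar x)) * f (joukowski (inverse t * zpar x))) meromorphic_on UNIV"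
  proof (rule meromorphic_on_compose_zpar)
    show "(\<lambda>z. f (joukowski (t * z)) * f (joukowski (inverse t * z))) meromorphic_on -{0}"
      by (intro meromorphic_on_mult meromorphic_on_compose_joukowski_scaled[OF f])
  qed (simp only: joukowski_mult_inverse inverse_inverse_eq, rule mult.commute)
  then show ?thesis
    by (simp add: eta_qpow_eq_joukowski t_def)
qed

lemma AW_meromorphic:
  assumes f: "f meromorphic_on UNIV"
  shows "AW q f meromorphic_on UNIV"
proof -
  define s where "s = csqrt q"
  define G where "G z = (f (joukowski (s * z)) - f (joukowski (inverse s * z))) /
    (joukowski (s * z) - joukowski (inverse s * z))" for z
  have mer: "(\<lambda>x. G (zpar x)) meromorphic_on UNIV"
  proof (rule meromorphic_on_compose_zpar)
    show "G meromorphic_on -{0}"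
      unfolding G_def
      by (intro meromorphic_intros meromorphic_on_compose_joukowski_scaled[OF f]
          analytic_on_imp_meromorphic_on analytic_on_joukowski_scaled)
    show "G (inverse z) = G z" for z
      unfolding G_def joukowski_mult_inverse inverse_inverse_eq
      by (metis minus_diff_eq minus_divide_divide)
  qed
  have quot: "AW q f w = G (zpar w)" if "w \<notin> {1, -1}" for w
    using that unfolding AW_def AW_quot_eq_joukowski G_def s_def by simp
  have ev: "\<forall>\<^sub>F w in at x. AW q f w = G (zpar w)" for x
    using eventually_neq_at_within[of 1 x UNIV] eventually_neq_at_within[of "-1" x UNIV]
    by eventually_elim (simp add: quot)
  show ?thesis
    by (rule meromorphic_on_cong[THEN iffD2, OF ev refl mer])
qed

lemma holomorphic_on_divide_out_zeros:
  assumes N: "N holomorphic_on S" "open S" and "a \<noteq> b" "N a = 0" "N b = 0"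
  obtains P where "P holomorphic_on S" "\<And>z. z \<notin> {a, b} \<Longrightarrow> P z = N z / ((z - a) * (z - b))"
proof -
  define P1 where "P1 z = (if z = a then deriv N a else (N z - N a) / (z - a))" for z
  have P1: "P1 holomorphic_on S"
    unfolding P1_def by (rule pole_lemma_open[OF N])
  have "P1 b = 0"
    using assms(3-5) by (simp add: P1_def)
  define P where "P z = (if z = b then deriv P1 b else (P1 z - P1 b) / (z - b))" for z
  have "P holomorphic_on S"
    unfolding P_def by (rule pole_lemma_open[OF P1 N(2)])
  moreover have "P z = N z / ((z - a) * (z - b))" if "z \<notin> {a, b}" for z
    using that \<open>P1 b = 0\<close> assms(4) by (simp add: P_def P1_def divide_divide_eq_left)
  ultimately show ?thesis
    using that by blast
qed

lemma AW_eq_continuous_extension: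
  assumes H: "continuous_on UNIV H" and quot: "\<And>x. x \<notin> {1, -1} \<Longrightarrow> AW_quot q f x = H x"
  shows "AW q f = H"
proof
  fix x
  show "AW q f x = H x"
  proof (cases "x \<in> {1, -1}")
    case True
    have "\<forall>\<^sub>F w in at x. H w = AW_quot q f w"
      using eventually_neq_at_within[of 1 x UNIV] eventually_neq_at_within[of "-1" x UNIV]
      by eventually_elim (simp add: quot)
    moreover have "(H \<longlongrightarrow> H x) (at x)"
      using H by (simp add: continuous_on_def)
    ultimately have "(AW_quot q f \<longlongrightarrow> H x) (at x)"
      by (rule Lim_transform_eventually[rotated])
    then show ?thesis
      using True by (auto simp: AW_def intro: tendsto_Lim)
  qed (use quot in \<open>auto simp: AW_def\<close>)
qed

lemma inversion_odd_quotient_extension: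
  assumes N: "N holomorphic_on -{0}" and N_inverse: "\<And>z. N (inverse z) = - N z" and "k \<noteq> 0"
  obtains G where "G holomorphic_on -{0}" "\<And>z. z \<noteq> 0 \<Longrightarrow> G (inverse z) = G z"
    "\<And>z. z \<notin> {0, 1, -1} \<Longrightarrow> G z = N z / (k * (z - inverse z))"
proof -
  have "N 1 = 0" "N (-1) = 0"
    using N_inverse[of 1] N_inverse[of "-1"] by simp_all
  with N obtain P where P: "P holomorphic_on -{0}"
    "\<And>z. z \<notin> {1, -1} \<Longrightarrow> P z = N z / ((z - 1) * (z + 1))"
    using holomorphic_on_divide_out_zeros[of N "-{0}" 1 "-1"] by (auto simp: open_Compl)
  define G where "G z = z * P z / k" for z
  have G_eq: "G z = N z / (k * (z - inverse z))" if "z \<notin> {0, 1, -1}" for z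
  proof -
    have "z * z - 1 = (z - 1) * (z + 1)" "z - 1 \<noteq> 0" "z + 1 \<noteq> 0"
      using that by (auto simp: algebra_simps add_eq_0_iff2 minus_equation_iff[of z])
    then show ?thesis
      using that \<open>k \<noteq> 0\<close> by (simp add: G_def P(2) field_simps)
  qed
  show ?thesis
  proof
    show "G holomorphic_on -{0}"
      unfolding G_def using \<open>k \<noteq> 0\<close>
      by (intro holomorphic_on_divide holomorphic_on_mult holomorphic_on_const P(1)) auto
    show "G (inverse z) = G z" if "z \<noteq> 0" for z
    proof (cases "z \<in> {1, -1}")
      case False
      then have "inverse z \<notin> {0, 1, -1}"
        using that by (auto simp: field_simps minus_equation_iff)
      then have "G (inverse z) = - N z / (k * (inverse z - z))"
        by (simp add: G_eq N_inverse)
      also have "\<dots> = N z / (k * (z - inverse z))"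
        by (metis minus_diff_eq minus_divide_divide mult_minus_right)
      also have "\<dots> = G z"
        using False that by (simp add: G_eq)
      finally show ?thesis .
    qed auto
  qed (rule G_eq)
qed

lemma AW_holomorphic:
  assumes q: "q \<noteq> 0" "q \<noteq> 1" and f: "f holomorphic_on UNIV"
  shows "AW q f holomorphic_on UNIV"
proof -
  define s where "s = csqrt q"
  have "s * s = q"
    using power2_csqrt[of q] by (simp add: s_def power2_eq_square)
  have k0: "(s - inverse s) / 2 \<noteq> 0"
  proof
    assume "(s - inverse s) / 2 = 0"
    then have "s * s = s * inverse s"
      by simp
    with \<open>s * s = q\<close> q show False
      by (metis right_inverse mult_zero_left)
  qed
  define N where "N z = f (joukowski (s * z)) - f (joukowski (inverse s * z))" for z
  have "N holomorphic_on -{0}"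
    unfolding N_def by (intro holomorphic_on_diff holomorphic_on_compose_joukowski_scaled[OF f])
  moreover have "N (inverse z) = - N z" for z
    unfolding N_def joukowski_mult_inverse inverse_inverse_eq by simp
  ultimately obtain G where G: "G holomorphic_on -{0}" "\<And>z. z \<noteq> 0 \<Longrightarrow> G (inverse z) = G z"
    "\<And>z. z \<notin> {0, 1, -1} \<Longrightarrow> G z = N z / ((s - inverse s) / 2 * (z - inverse z))"
    using inversion_odd_quotient_extension k0 by blast
  have "AW_quot q f x = G (zpar x)" if "x \<notin> {1, -1}" for x
  proof -
    have "zpar x \<notin> {0, 1, -1}"
      using that zpar_nonzero zpar_eq_pm1_iff[of 1 x] zpar_eq_pm1_iff[of "-1" x] by auto
    have D: "joukowski (s * z) - joukowski (inverse s * z) = (s - inverse s) / 2 * (z - inverse z)"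
      for z
      unfolding joukowski_def inverse_mult_distrib
      by (simp add: diff_divide_distrib[symmetric] algebra_simps)
    have "AW_quot q f x = N (zpar x) / ((s - inverse s) / 2 * (zpar x - inverse (zpar x)))"
      by (simp only: AW_quot_eq_joukowski s_def[symmetric] N_def D)
    with \<open>zpar x \<notin> {0, 1, -1}\<close> show ?thesis
      by (simp add: G(3))
  qed
  moreover have hol: "(\<lambda>x. G (zpar x)) holomorphic_on UNIV"
    using G(1,2) by (rule holomorphic_on_compose_zpar)
  ultimately have "AW q f = (\<lambda>x. G (zpar x))"
    by (intro AW_eq_continuous_extension holomorphic_on_imp_continuous_on)
  with hol show ?thesis
    by simp
qed

lemma AW_pow_preserves:
  assumes "\<And>g. P g \<Longrightarrow> P (AW q g)" "P f"
  shows "P (AW_pow q n f)"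
  by (induction n) (simp_all add: AW_pow_def assms)

theorem proposition2p3:
  fixes q :: complex and n :: nat and f :: "complex \<Rightarrow> complex"
  assumes "0 < cmod q" and "cmod q < 1"
  shows "(f holomorphic_on UNIV \<longrightarrow>
            AW_pow q n f holomorphic_on UNIV \<and>
            Avg q n f holomorphic_on UNIV \<and>
            (\<lambda>x. eta_qpow q n f x * eta_qpow_neg q n f x) holomorphic_on UNIV) \<and>
         (f meromorphic_on UNIV \<longrightarrow>
            AW_pow q n f meromorphic_on UNIV \<and>
            Avg q n f meromorphic_on UNIV \<and>
            (\<lambda>x. eta_qpow q n f x * eta_qpow_neg q n f x) meromorphic_on UNIV)"
proof -
  have "q \<noteq> 0" "q \<noteq> 1"
    using assms by auto
  then show ?thesis
    using AW_pow_preserves[of "\<lambda>g. g holomorphic_on UNIV", OF AW_holomorphic]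
      AW_pow_preserves[of "\<lambda>g. g meromorphic_on UNIV", OF AW_meromorphic]
      Avg_holomorphic Avg_meromorphic eta_qpow_product_holomorphic eta_qpow_product_meromorphic
    by blast
qed

end
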